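(* Fix $c \in \mathbb{R}$ and $p \in (0,1)$. For each $x^{\text{obs}} > c$ let $\theta(p) = \theta(p; x^{\text{obs}}, c)$ be the unique $\theta \in \mathbb{R}$ solving $F(x^{\text{obs}}; \theta, c) = p$. Then $\theta(p) \to -\infty$ as $x^{\text{obs}} \downarrow c$.
   Context: Let $\Phi$ denote the standard normal distribution function. For $c \in \mathbb{R}$, $a \ge c$ and $\theta \in \mathbb{R}$ define $$F(a;\theta,c) = \frac{\Phi(a-\theta) - \Phi(c-\theta)}{1-\Phi(c-\theta)},$$ which is the distribution function $\Pr(X \le a \mid X \ge c)$ of $X \sim N(\theta,1)$ conditional on $X \ge c$. It is known that for each fixed $x^{\text{obs}} > c$ the map $\theta \mapsto F(x^{\text{obs}};\theta,c)$ is continuous and strictly decreasing from $\mathbb{R}$ onto $(0,1)$, so $\theta(p)$ is well defined for every $p\in(0,1)$. *)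

theory Defs
  imports "HOL-Probability.Probability"
begin

definition Phi :: "real \<Rightarrow> real" where
  "Phi a = (LBINT x:{..a}. std_normal_density x)"

text \<open>Conditional distribution function of X ~ N(theta,1) given X >= c, evaluated at a.\<close>
definition F :: "real \<Rightarrow> real \<Rightarrow> real \<Rightarrow> real" where
  "F a \<theta> c = (Phi (a - \<theta>) - Phi (c - \<theta>)) / (1 - Phi (c - \<theta>))"

definition theta :: "real \<Rightarrow> real \<Rightarrow> real \<Rightarrow> real" where
  "theta p xobs c = (THE \<theta>. F xobs \<theta> c = p)"

end

theory Submission
  imports Defs "HOL-Real_Asymp.Real_Asymp"
begin

(* Write Q = 1 - Phi for the standard normal tail, so that
   F(a;\<theta>,c) = 1 - Q(a - \<theta>) / Q(c - \<theta>).
   Mills' inequality t Q(t) < phi(t) makes the Mills ratio Q/phi strictly decreasing, which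
   says that Q is strictly log-concave: for d > 0 the ratio Q(t + d)/Q(t) decreases strictly
   in t, and it becomes arbitrarily small because phi(t + d)/phi(t) = exp(-t d - d^2/2) does.
   Hence for a > c the map \<theta> \<mapsto> F(a;\<theta>,c) is strictly decreasing and exceeds p for very
   negative \<theta>, so F(a;M,c) < p forces \<theta>(p) \<le> M.  For fixed M, F(a;M,c) tends to
   F(c;M,c) = 0 < p as a \<down> c, hence eventually \<theta>(p) \<le> M. *)

lemma real_distribution_std_normal: "real_distribution (density lborel std_normal_density)"
  unfolding real_distribution_def real_distribution_axioms_def
  using prob_space_normal_density[of 1 0] by simp

lemma Phi_eq_cdf: "Phi x = cdf (density lborel std_normal_density) x"
proof -
  have "cdf (density lborel std_normal_density) x
      = integral\<^sup>L (density lborel std_normal_density) (indicator {..x})"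
    by (simp add: cdf_def)
  also have "\<dots> = integral\<^sup>L lborel (\<lambda>y. std_normal_density y *\<^sub>R indicator {..x} y)"
    by (rule integral_density) auto
  finally show ?thesis
    unfolding Phi_def set_lebesgue_integral_def by (simp add: mult.commute)
qed

lemma Phi_le_1: "Phi x \<le> 1"
  using real_distribution.cdf_bounded_prob[OF real_distribution_std_normal] by (simp add: Phi_eq_cdf)

lemma Phi_tendsto_1: "(Phi \<longlongrightarrow> 1) at_top"
  using real_distribution.cdf_lim_at_top_prob[OF real_distribution_std_normal]
  by (simp add: Phi_eq_cdf[abs_def])

lemma Phi_eq_Phi_0_plus_integral: "Phi x = Phi 0 + (LBINT y=ereal 0..x. std_normal_density y)"
proof -
  have integrable: "interval_lebesgue_integrable lborel a b std_normal_density" for a b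
    unfolding interval_lebesgue_integrable_def set_integrable_def
    using integrable_mult_indicator[of "einterval a b" lborel std_normal_density]
      integrable_mult_indicator[of "einterval b a" lborel std_normal_density] by simp
  have Phi_eq_integral: "Phi x = (LBINT y=-\<infinity>..ereal x. std_normal_density y)" for x
    unfolding Phi_def by (subst interval_integral_Ioc') (auto simp: atMost_def)
  show ?thesis
    unfolding Phi_eq_integral using interval_integral_sum[of "-\<infinity>" "ereal 0" "ereal x" std_normal_density, OF integrable]
    by linarith
qed

lemma std_normal_density_pos: "0 < std_normal_density t"
  using normal_density_pos[of 1 0 t] by simp

lemma std_normal_density_has_real_derivative:
  "(std_normal_density has_real_derivative (- x * std_normal_density x)) (at x)"
proof -
  have "((\<lambda>x. exp (- x\<^sup>2 / 2)) has_real_derivative exp (- x\<^sup>2 / 2) * (- x)) (at x)"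
    by (auto intro!: derivative_eq_intros)
  then have "((\<lambda>x. (1 / sqrt (2 * pi)) * exp (- x\<^sup>2 / 2)) has_real_derivative
      (1 / sqrt (2 * pi)) * (exp (- x\<^sup>2 / 2) * (- x))) (at x)"
    by (rule DERIV_cmult)
  then show ?thesis
    unfolding std_normal_density_def[abs_def] std_normal_density_def by (simp add: mult_ac)
qed

lemma continuous_on_std_normal_density: "continuous_on S std_normal_density"
  using std_normal_density_has_real_derivative
  by (meson DERIV_isCont continuous_at_imp_continuous_on)

lemma Phi_has_real_derivative: "(Phi has_real_derivative std_normal_density x) (at x)"
proof -
  let ?I = "\<lambda>u. LBINT y=ereal 0..u. std_normal_density y"
  have "(?I has_vector_derivative std_normal_density x) (at x within {min 0 x - 1..max 0 x + 1})"
    by (rule interval_integral_FTC2) (auto simp: continuous_on_std_normal_density)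
  then have "(?I has_vector_derivative std_normal_density x) (at x)"
    by (subst (asm) at_within_Icc_at) auto
  then have "((\<lambda>u. Phi 0 + ?I u) has_real_derivative std_normal_density x) (at x)"
    by (auto simp: has_real_derivative_iff_has_vector_derivative intro!: derivative_eq_intros)
  then show ?thesis
    by (subst Phi_eq_Phi_0_plus_integral[abs_def])
qed

lemma isCont_Phi: "isCont Phi t"
  using Phi_has_real_derivative DERIV_isCont by blast

definition normal_tail :: "real \<Rightarrow> real" where
  "normal_tail t = 1 - Phi t"

lemma normal_tail_has_real_derivative:
  "(normal_tail has_real_derivative - std_normal_density t) (at t)"
  unfolding normal_tail_def[abs_def] by (auto intro!: derivative_eq_intros Phi_has_real_derivative)

lemma normal_tail_pos: "0 < normal_tail t"
proof -
  have "Phi t < Phi (t + 1)"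
    by (rule DERIV_pos_imp_increasing)
      (auto intro: Phi_has_real_derivative std_normal_density_pos)
  then show ?thesis
    using Phi_le_1[of "t + 1"] unfolding normal_tail_def by simp
qed

lemma normal_tail_tendsto_0: "(normal_tail \<longlongrightarrow> 0) at_top"
  using tendsto_diff[OF tendsto_const[of 1] Phi_tendsto_1]
  by (simp add: normal_tail_def[abs_def])

lemma normal_tail_less_density_div:
  assumes "0 < t"
  shows "normal_tail t < std_normal_density t / t"
proof -
  let ?w = "\<lambda>x. std_normal_density x / x - normal_tail x"
  have "0 < ?w t"
  proof (rule DERIV_neg_imp_decreasing_at_top[where b = t, of _ 0, simplified])
    fix x assume "t \<le> x"
    with assms have "x \<noteq> 0" by simp
    have "(?w has_real_derivative
        ((- x * std_normal_density x) * x - std_normal_density x * 1) / (x * x)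
          - (- std_normal_density x)) (at x)"
      using \<open>x \<noteq> 0\<close>
      by (intro DERIV_diff DERIV_divide std_normal_density_has_real_derivative
          normal_tail_has_real_derivative DERIV_ident)
    moreover have "((- x * std_normal_density x) * x - std_normal_density x * 1) / (x * x)
        - (- std_normal_density x) = - (std_normal_density x / x\<^sup>2)"
      using \<open>x \<noteq> 0\<close> by (simp add: field_simps power2_eq_square)
    moreover have "0 < std_normal_density x / x\<^sup>2"
      using \<open>x \<noteq> 0\<close> std_normal_density_pos[of x] by simp
    ultimately show "\<exists>y. (?w has_real_derivative y) (at x) \<and> y < 0"
      by (intro exI[of _ "- (std_normal_density x / x\<^sup>2)"]) auto
  next
    have "((\<lambda>x. std_normal_density x / x) \<longlongrightarrow> 0) at_top"
      unfolding std_normal_density_def by real_asymp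
    then show "(?w \<longlongrightarrow> 0) at_top"
      using tendsto_diff[OF _ normal_tail_tendsto_0] by simp
  qed
  then show ?thesis by simp
qed

lemma mills_inequality: "t * normal_tail t < std_normal_density t"
proof (cases "t \<le> 0")
  case True
  then have "t * normal_tail t \<le> 0"
    using normal_tail_pos[of t] by (simp add: mult_nonpos_nonneg)
  then show ?thesis using std_normal_density_pos[of t] by linarith
next
  case False
  then show ?thesis
    using normal_tail_less_density_div[of t] by (simp add: field_simps)
qed

lemma mills_ratio_strict_decreasing:
  assumes "s < t"
  shows "normal_tail t / std_normal_density t < normal_tail s / std_normal_density s"
proof (rule DERIV_neg_imp_decreasing[OF assms])
  fix x
  let ?\<phi> = "std_normal_density x" and ?Q = "normal_tail x"
  have "((\<lambda>x. normal_tail x / std_normal_density x) has_real_derivative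
      ((- ?\<phi>) * ?\<phi> - ?Q * (- x * ?\<phi>)) / (?\<phi> * ?\<phi>)) (at x)"
    using std_normal_density_pos[of x]
    by (intro DERIV_divide std_normal_density_has_real_derivative normal_tail_has_real_derivative)
      auto
  moreover have "((- ?\<phi>) * ?\<phi> - ?Q * (- x * ?\<phi>)) / (?\<phi> * ?\<phi>) = - ((?\<phi> - x * ?Q) / ?\<phi>)"
    using std_normal_density_pos[of x] by (simp add: field_simps)
  moreover have "0 < (?\<phi> - x * ?Q) / ?\<phi>"
    using std_normal_density_pos[of x] mills_inequality[of x] by simp
  ultimately show "\<exists>y. ((\<lambda>x. normal_tail x / std_normal_density x) has_real_derivative y) (at x) \<and> y < 0"
    by (intro exI[of _ "- ((?\<phi> - x * ?Q) / ?\<phi>)"]) auto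
qed

lemma normal_tail_shift_mult_less:
  assumes "0 < d"
  shows "normal_tail (t + d) * std_normal_density t < normal_tail t * std_normal_density (t + d)"
  using mills_ratio_strict_decreasing[of t "t + d"] assms
    std_normal_density_pos[of t] std_normal_density_pos[of "t + d"]
  by (simp add: divide_simps)

lemma normal_tail_ratio_strict_decreasing:
  assumes "0 < d" "s < t"
  shows "normal_tail (t + d) / normal_tail t < normal_tail (s + d) / normal_tail s"
proof (rule DERIV_neg_imp_decreasing[OF assms(2)])
  fix x
  let ?Q = normal_tail and ?\<phi> = std_normal_density
  have "((\<lambda>x. ?Q (x + d)) has_real_derivative - ?\<phi> (x + d)) (at x)"
    using normal_tail_has_real_derivative[of "x + d"] by (simp add: DERIV_shift)
  then have "((\<lambda>x. ?Q (x + d) / ?Q x) has_real_derivative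
      ((- ?\<phi> (x + d)) * ?Q x - ?Q (x + d) * (- ?\<phi> x)) / (?Q x * ?Q x)) (at x)"
    using normal_tail_pos[of x] by (intro DERIV_divide normal_tail_has_real_derivative) auto
  moreover have "((- ?\<phi> (x + d)) * ?Q x - ?Q (x + d) * (- ?\<phi> x)) / (?Q x * ?Q x) < 0"
    using normal_tail_shift_mult_less[OF assms(1), of x] normal_tail_pos[of x]
    by (intro divide_neg_pos) (simp_all add: algebra_simps)
  ultimately show "\<exists>y. ((\<lambda>x. ?Q (x + d) / ?Q x) has_real_derivative y) (at x) \<and> y < 0"
    by blast
qed

lemma normal_tail_ratio_less:
  assumes "0 < d" "0 < q"
  obtains t where "normal_tail (t + d) / normal_tail t < q"
proof
  define t where "t = - ln q / d"
  have "normal_tail (t + d) / normal_tail t < std_normal_density (t + d) / std_normal_density t"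
    using normal_tail_shift_mult_less[OF assms(1), of t]
      std_normal_density_pos[of t] normal_tail_pos[of t]
    by (simp add: divide_simps mult.commute)
  also have "\<dots> = exp (- (t + d)\<^sup>2 / 2 - (- t\<^sup>2 / 2))"
    unfolding std_normal_density_def exp_diff by simp
  also have "- (t + d)\<^sup>2 / 2 - (- t\<^sup>2 / 2) = ln q - d\<^sup>2 / 2"
    using assms unfolding t_def by (simp add: power2_eq_square field_simps)
  also have "exp (ln q - d\<^sup>2 / 2) < q"
    using assms exp_less_mono[of "ln q - d\<^sup>2 / 2" "ln q"] by simp
  finally show "normal_tail (t + d) / normal_tail t < q" .
qed

lemma F_eq_normal_tail: "F a \<theta> c = 1 - normal_tail (a - \<theta>) / normal_tail (c - \<theta>)"
  using normal_tail_pos[of "c - \<theta>"] unfolding F_def normal_tail_def by (simp add: field_simps)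

lemma continuous_F:
  assumes "continuous (at x within S) f" "continuous (at x within S) g"
    "continuous (at x within S) h"
  shows "continuous (at x within S) (\<lambda>x. F (f x) (g x) (h x))"
proof -
  have Phi: "continuous (at x within S) (\<lambda>x. Phi (k x))" if "continuous (at x within S) k" for k
    by (rule continuous_within_compose3[OF isCont_Phi that])
  have "1 - Phi (h x - g x) \<noteq> 0"
    using normal_tail_pos[of "h x - g x"] unfolding normal_tail_def by simp
  then show ?thesis
    unfolding F_def using assms by (intro continuous_intros Phi) auto
qed

lemma F_strict_decreasing:
  assumes "c < a" "\<theta>\<^sub>1 < \<theta>\<^sub>2"
  shows "F a \<theta>\<^sub>2 c < F a \<theta>\<^sub>1 c"
  using normal_tail_ratio_strict_decreasing[of "a - c" "c - \<theta>\<^sub>2" "c - \<theta>\<^sub>1"] assms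
  by (simp add: F_eq_normal_tail)

lemma theta_eqI:
  assumes "c < a" "F a \<theta> c = p"
  shows "theta p a c = \<theta>"
  unfolding theta_def
proof (rule the_equality)
  fix \<theta>' assume "F a \<theta>' c = p"
  then show "\<theta>' = \<theta>"
    using F_strict_decreasing[OF \<open>c < a\<close>, of \<theta>' \<theta>] F_strict_decreasing[OF \<open>c < a\<close>, of \<theta> \<theta>'] assms(2)
    by (cases "\<theta>' < \<theta>"; cases "\<theta> < \<theta>'") auto
qed (rule assms(2))

lemma theta_le:
  assumes "p < 1" "c < a" "F a M c < p"
  shows "theta p a c \<le> M"
proof -
  obtain t where t: "normal_tail (t + (a - c)) / normal_tail t < 1 - p"
    using normal_tail_ratio_less[of "a - c" "1 - p"] assms by auto
  have "p < F a (c - t) c"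
    using t by (simp add: F_eq_normal_tail algebra_simps)
  then have "c - t < M"
    using F_strict_decreasing[OF \<open>c < a\<close>, of M "c - t"] assms(3) by (smt (verit))
  moreover have "continuous_on {c - t..M} (\<lambda>\<theta>. F a \<theta> c)"
    by (intro continuous_at_imp_continuous_on ballI continuous_F continuous_intros)
  ultimately obtain \<theta> where "\<theta> \<le> M" "F a \<theta> c = p"
    using IVT2'[of "\<lambda>\<theta>. F a \<theta> c" M p "c - t"] \<open>p < F a (c - t) c\<close> assms(3) by auto
  then show ?thesis
    using theta_eqI[OF \<open>c < a\<close>, of \<theta> p] by simp
qed

theorem theorem1:
  fixes c p :: real
  assumes "0 < p" and "p < 1"
  shows "filterlim (\<lambda>xobs. theta p xobs c) at_bot (at_right c)"
  unfolding filterlim_at_bot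
proof
  fix M
  have "continuous (at_right c) (\<lambda>a. F a M c)"
    by (intro continuous_F continuous_intros)
  then have "((\<lambda>a. F a M c) \<longlongrightarrow> F c M c) (at_right c)"
    by (simp add: continuous_within)
  moreover have "F c M c = 0"
    unfolding F_def by simp
  ultimately have "eventually (\<lambda>a. F a M c < p) (at_right c)"
    using order_tendstoD(2) \<open>0 < p\<close> by metis
  then show "eventually (\<lambda>a. theta p a c \<le> M) (at_right c)"
    using eventually_at_right_less[of c]
    by eventually_elim (use theta_le \<open>p < 1\<close> in blast)
qed

end
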